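(* Let $X$ be a prelength space, $Y$ a metric space, and $f:X\to Y$ uniformly continuous with modulus $\mu_f$. For every $x\in\mathfrak{C}(X)$, the function $\mathrm{map}(f)(x)=f\circ x\circ\mu_f$, i.e. $\lambda\varepsilon.\,f(x(\mu_f(\varepsilon)))$, is a regular function over $Y$.
   Context: $\mathbb{Q}^+$ denotes the strictly positive rationals; all $\varepsilon,\delta$ (with indices) range over $\mathbb{Q}^+$. A metric space is a triple $(X,\asymp,B)$ where $\asymp$ is an equivalence relation on $X$ and $B$ assigns to each $\varepsilon\in\mathbb{Q}^+$ a binary relation $B_\varepsilon$ on $X$ respecting $\asymp$, such that: (1) each $B_\varepsilon$ is reflexive; (2) each $B_\varepsilon$ is symmetric; (3) if $B_{\varepsilon_1}(a,b)$ and $B_{\varepsilon_2}(b,c)$ then $B_{\varepsilon_1+\varepsilon_2}(a,c)$; (4) if $B_{\varepsilon+\delta}(a,b)$ for all $\delta$, then $B_\varepsilon(a,b)$; (5) if $B_\varepsilon(a,b)$ for all $\varepsilon$, then $a\asymp b$. A prelength space is a metric space such that for all $a,b,\varepsilon,\delta_1,\delta_2$ with $\varepsilon<\delta_1+\delta_2$ and $B_\varepsilon(a,b)$ there exists $c$ with $B_{\delta_1}(a,c)$ and $B_{\delta_2}(c,b)$. A regular function over $X$ is a function $x:\mathbb{Q}^+\to X$ such that $B_{\varepsilon_1+\varepsilon_2}(x(\varepsilon_1),x(\varepsilon_2))$ for all $\varepsilon_1,\varepsilon_2$; $\mathfrak{C}(X)$ denotes the set of regular functions over $X$. A function $f:X\to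 Y$ between metric spaces is uniformly continuous with modulus $\mu:\mathbb{Q}^+\to\mathbb{Q}^+$ if for all $\varepsilon,x_1,x_2$, $B^X_{\mu(\varepsilon)}(x_1,x_2)$ implies $B^Y_\varepsilon(f(x_1),f(x_2))$. *)

theory Defs
  imports Main "HOL.Rat"
begin

text \<open>A metric space in the sense of the paper: the carrier is the whole type 'a,
  eq is the equivalence relation, B e is the ball relation for e a positive rational.\<close>

definition metric_space_ax :: "('a \<Rightarrow> 'a \<Rightarrow> bool) \<Rightarrow> (rat \<Rightarrow> 'a \<Rightarrow> 'a \<Rightarrow> bool) \<Rightarrow> bool" where
  "metric_space_ax eq B \<longleftrightarrow>
     equivp eq \<and>
     (\<forall>e a a' b b'. 0 < e \<longrightarrow> eq a a' \<longrightarrow> eq b b' \<longrightarrow> (B e a b \<longleftrightarrow> B e a' b')) \<and>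
     (\<forall>e a. 0 < e \<longrightarrow> B e a a) \<and>
     (\<forall>e a b. 0 < e \<longrightarrow> B e a b \<longrightarrow> B e b a) \<and>
     (\<forall>e1 e2 a b c. 0 < e1 \<longrightarrow> 0 < e2 \<longrightarrow> B e1 a b \<longrightarrow> B e2 b c \<longrightarrow> B (e1 + e2) a c) \<and>
     (\<forall>e a b. 0 < e \<longrightarrow> (\<forall>d. 0 < d \<longrightarrow> B (e + d) a b) \<longrightarrow> B e a b) \<and>
     (\<forall>a b. (\<forall>e. 0 < e \<longrightarrow> B e a b) \<longrightarrow> eq a b)"

definition prelength_space :: "('a \<Rightarrow> 'a \<Rightarrow> bool) \<Rightarrow> (rat \<Rightarrow> 'a \<Rightarrow> 'a \<Rightarrow> bool) \<Rightarrow> bool" where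
  "prelength_space eq B \<longleftrightarrow> metric_space_ax eq B \<and>
     (\<forall>a b e d1 d2. 0 < e \<longrightarrow> 0 < d1 \<longrightarrow> 0 < d2 \<longrightarrow> e < d1 + d2 \<longrightarrow> B e a b \<longrightarrow>
        (\<exists>c. B d1 a c \<and> B d2 c b))"

text \<open>Regular functions: x is only meaningful on positive rationals.\<close>
definition regular_fun :: "(rat \<Rightarrow> 'a \<Rightarrow> 'a \<Rightarrow> bool) \<Rightarrow> (rat \<Rightarrow> 'a) \<Rightarrow> bool" where
  "regular_fun B x \<longleftrightarrow> (\<forall>e1 e2. 0 < e1 \<longrightarrow> 0 < e2 \<longrightarrow> B (e1 + e2) (x e1) (x e2))"

definition unif_cont_mod :: "(rat \<Rightarrow> 'a \<Rightarrow> 'a \<Rightarrow> bool) \<Rightarrow> (rat \<Rightarrow> 'b \<Rightarrow> 'b \<Rightarrow> bool) \<Rightarrow> ('a \<Rightarrow> 'b) \<Rightarrow> (rat \<Rightarrow> rat) \<Rightarrow> bool" where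
  "unif_cont_mod BX BY f mu \<longleftrightarrow> (\<forall>e. 0 < e \<longrightarrow> 0 < mu e) \<and>
     (\<forall>e x1 x2. 0 < e \<longrightarrow> BX (mu e) x1 x2 \<longrightarrow> BY e (f x1) (f x2))"

end

theory Submission
  imports Defs
begin

text \<open>In a prelength space a ball of radius \<open>\<mu> \<epsilon>\<^sub>1 + \<mu> \<epsilon>\<^sub>2\<close> can be crossed in three
  hops of radii \<open>\<mu> \<epsilon>\<^sub>1\<close>, \<open>\<mu> \<delta>\<close>, \<open>\<mu> \<epsilon>\<^sub>2\<close>; applying \<open>f\<close> hop by hop gives distance
  \<open>\<epsilon>\<^sub>1 + \<delta> + \<epsilon>\<^sub>2\<close>, and closedness of the balls lets \<open>\<delta>\<close> go to zero. So the modulus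
  \<open>\<mu>\<close> behaves additively, which is exactly what regularity of \<open>f \<circ> x \<circ> \<mu>\<close> needs.\<close>

lemma metric_space_ax_triangle:
  assumes "metric_space_ax eq B" "0 < e1" "0 < e2" "B e1 a b" "B e2 b c"
  shows "B (e1 + e2) a c"
  using assms unfolding metric_space_ax_def by blast

lemma metric_space_ax_closed:
  assumes "metric_space_ax eq B" "0 < e" "\<And>d. 0 < d \<Longrightarrow> B (e + d) a b"
  shows "B e a b"
  using assms unfolding metric_space_ax_def by blast

lemma prelength_space_split:
  assumes "prelength_space eq B" "0 < e" "0 < d1" "0 < d2" "e < d1 + d2" "B e a b"
  obtains c where "B d1 a c" "B d2 c b"
  using assms unfolding prelength_space_def by blast

lemma prelength_space_split3:
  assumes "prelength_space eq B" "0 < d1" "0 < d2" "0 < d3" "B (d1 + d3) a b"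
  obtains c1 c2 where "B d1 a c1" "B d2 c1 c2" "B d3 c2 b"
proof -
  \<comment> \<open>Any radius strictly between \<open>d3\<close> and \<open>d2 + d3\<close> makes both splits strict.\<close>
  obtain c1 where c1: "B d1 a c1" "B (d2 / 2 + d3) c1 b"
    using prelength_space_split[OF assms(1) _ _ _ _ assms(5), of d1 "d2 / 2 + d3"] assms(2-4)
    by auto
  obtain c2 where "B d2 c1 c2" "B d3 c2 b"
    using prelength_space_split[OF assms(1) _ _ _ _ c1(2), of d2 d3] assms(3,4) by auto
  with c1(1) show thesis by (rule that)
qed

lemma unif_cont_mod_pos:
  assumes "unif_cont_mod BX BY f mu" "0 < e"
  shows "0 < mu e"
  using assms unfolding unif_cont_mod_def by blast

lemma unif_cont_modD:
  assumes "unif_cont_mod BX BY f mu" "0 < e" "BX (mu e) a b"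
  shows "BY e (f a) (f b)"
  using assms unfolding unif_cont_mod_def by blast

lemma unif_cont_mod_add:
  assumes X: "prelength_space eqX BX" and Y: "metric_space_ax eqY BY"
    and f: "unif_cont_mod BX BY f mu"
    and "0 < e1" "0 < e2" "BX (mu e1 + mu e2) a b"
  shows "BY (e1 + e2) (f a) (f b)"
proof (rule metric_space_ax_closed[OF Y])
  show "0 < e1 + e2" using assms(4,5) by simp
  fix d :: rat assume "0 < d"
  obtain c1 c2 where "BX (mu e1) a c1" "BX (mu d) c1 c2" "BX (mu e2) c2 b"
    using prelength_space_split3[OF X _ _ _ assms(6)] unif_cont_mod_pos[OF f] assms(4,5) \<open>0 < d\<close>
    by metis
  then have "BY e1 (f a) (f c1)" "BY d (f c1) (f c2)" "BY e2 (f c2) (f b)"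
    using unif_cont_modD[OF f] assms(4,5) \<open>0 < d\<close> by blast+
  then have "BY (e1 + d + e2) (f a) (f b)"
    using metric_space_ax_triangle[OF Y] assms(4,5) \<open>0 < d\<close> by (meson add_pos_pos)
  then show "BY (e1 + e2 + d) (f a) (f b)"
    by (simp add: ac_simps)
qed

theorem theorem16:
  fixes eqX :: "'a \<Rightarrow> 'a \<Rightarrow> bool" and BX :: "rat \<Rightarrow> 'a \<Rightarrow> 'a \<Rightarrow> bool"
    and eqY :: "'b \<Rightarrow> 'b \<Rightarrow> bool" and BY :: "rat \<Rightarrow> 'b \<Rightarrow> 'b \<Rightarrow> bool"
    and f :: "'a \<Rightarrow> 'b" and mu :: "rat \<Rightarrow> rat" and x :: "rat \<Rightarrow> 'a"
  assumes "prelength_space eqX BX"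
    and "metric_space_ax eqY BY"
    and "unif_cont_mod BX BY f mu"
    and "regular_fun BX x"
  shows "regular_fun BY (\<lambda>e. f (x (mu e)))"
  unfolding regular_fun_def
proof (intro allI impI)
  fix e1 e2 :: rat assume "0 < e1" "0 < e2"
  then have "BX (mu e1 + mu e2) (x (mu e1)) (x (mu e2))"
    using assms(4) unif_cont_mod_pos[OF assms(3)] unfolding regular_fun_def by blast
  then show "BY (e1 + e2) (f (x (mu e1))) (f (x (mu e2)))"
    using unif_cont_mod_add[OF assms(1-3)] \<open>0 < e1\<close> \<open>0 < e2\<close> by blast
qed

end
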